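(* Let $t\geqslant 2$, $r\in\{2t,2t+1\}$ and $n\geqslant 2r-1$. (1) Let $2\leqslant s\leqslant r$ and $\ell=2s-1$. Let $I^{\ell}\in\mathrm{Sym}_n$ be a permutation whose non-trivial cycles are one cycle of length $\ell$ and $r-s$ cycles of length $2$, so that $w_H(I^\ell)=2r-1$. Then $$|N_3(I^{\ell})|=\begin{cases}\ell\sum_{i=1}^{s-1}\binom{r-s}{t-i}, & r=2t,\\[2pt] \ell\sum_{i=1}^{s-2}\binom{r-s}{t-i}, & r=2t+1.\end{cases}$$ (2) Let $2\leqslant s\leqslant r-2$ and $\ell=2s$. Let $I^{\ell}\in\mathrm{Sym}_n$ be a permutation whose non-trivial cycles are one cycle of length $\ell$, one cycle of length $3$ and $r-s-2$ cycles of length $2$, so that $w_H(I^\ell)=2r-1$. Then $$|N_3(I^{\ell})|=\begin{cases}2(\ell+3)\binom{r-s-2}{t-1}+\ell\sum_{i=1}^{s-2}\binom{r-s-1}{t-i-1}, & r=2t,\\[2pt] \ell\sum_{i=1}^{s-1}\binom{r-s-1}{t-i}, & r=2t+1.\end{cases}$$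
   Context: $\mathrm{Sym}_n$ is the symmetric group on $[n]$, and $w_H(\pi)=|\{i:\pi(i)\neq i\}|$. $Tc(\pi)=\{(i,\pi(i)):\pi(i)\neq i\}$. For $\pi$ with $w_H(\pi)=2r-1$, $N_3(\pi)=\{\sigma\in\mathrm{Sym}_n:|Tc(\sigma)\cap Tc(\pi)|=r-1,\ |Tc(\sigma)|=r\}$. Binomial convention: $\binom{0}{0}=1$ and $\binom{p}{q}=0$ if $p<q$, $p<0$ or $q<0$. Empty sums are $0$. *)

theory Defs
  imports "HOL-Combinatorics.Permutations" "HOL-Combinatorics.Orbits"
begin

definition Sym :: "nat \<Rightarrow> (nat \<Rightarrow> nat) set" where
  "Sym n = {p. p permutes {1..n}}"

definition wH :: "nat \<Rightarrow> (nat \<Rightarrow> nat) \<Rightarrow> nat" where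
  "wH n p = card {i \<in> {1..n}. p i \<noteq> i}"

definition Tc :: "(nat \<Rightarrow> nat) \<Rightarrow> (nat \<times> nat) set" where
  "Tc p = {(i, p i) | i. p i \<noteq> i}"

text \<open>N_3(pi) for pi with w_H(pi) = 2r-1, i.e. r = (w_H(pi)+1)/2.\<close>
definition N3 :: "nat \<Rightarrow> (nat \<Rightarrow> nat) \<Rightarrow> (nat \<Rightarrow> nat) set" where
  "N3 n p = (let r = (wH n p + 1) div 2 in
     {\<sigma> \<in> Sym n. card (Tc \<sigma> \<inter> Tc p) = r - 1 \<and> card (Tc \<sigma>) = r})"

definition nontriv_cycles :: "nat \<Rightarrow> (nat \<Rightarrow> nat) \<Rightarrow> nat set set" where
  "nontriv_cycles n p = {orbit p x | x. x \<in> {1..n} \<and> p x \<noteq> x}"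

definition ncyc :: "nat \<Rightarrow> (nat \<Rightarrow> nat) \<Rightarrow> nat \<Rightarrow> nat" where
  "ncyc n p k = card {c \<in> nontriv_cycles n p. card c = k}"

definition binomz :: "int \<Rightarrow> int \<Rightarrow> int" where
  "binomz p q = (if q < 0 \<or> p < 0 \<or> p < q then 0 else int (nat p choose nat q))"

end

theory Submission
  imports Defs
begin

text \<open>A permutation \<open>\<sigma>\<close> with \<open>r\<close> moved points that agrees with \<open>p\<close> on \<open>r - 1\<close> of them is
  determined by its agreement set \<open>D\<close>: on \<open>D\<close> it is \<open>p\<close>, and the remaining moved point \<open>j\<close>, the
  only point of \<open>p D - D\<close>, is sent to \<open>a\<close>, the only point of \<open>D - p D\<close>. The sets \<open>D\<close> arising
  this way are exactly the unions of a family \<open>F\<close> of whole cycles of \<open>p\<close> with an arc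
  \<open>a, p a, \<dots>, p\<^sup>d\<^sup>-\<^sup>1 a\<close> of one further cycle \<open>C\<close>, where \<open>1 \<le> d \<le> |C| - 2\<close>. Hence
  \<open>|N\<^sub>3(p)| = \<Sum>\<^sub>C |C| \<Sum>\<^sub>d #{F. d + \<Sum>\<^sub>F |C'| = r - 1}\<close>. For the two cycle types at hand,
  apart from at most one other cycle the family \<open>F\<close> consists of 2-cycles, so the inner count
  is a binomial coefficient that vanishes unless \<open>d\<close> has the parity of \<open>r - 1\<close>; summing over
  \<open>d\<close> gives the stated formulas, in case (2) with \<open>r\<close> even after using the symmetry of the
  binomial coefficients and Pascal's rule.\<close>

section \<open>Agreement sets\<close>

definition agreement :: "(nat \<Rightarrow> nat) \<Rightarrow> (nat \<Rightarrow> nat) \<Rightarrow> nat set" where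
  "agreement p \<sigma> = {i. \<sigma> i \<noteq> i \<and> \<sigma> i = p i}"

lemma card_Tc: "card (Tc \<sigma>) = card {i. \<sigma> i \<noteq> i}"
proof -
  have "Tc \<sigma> = (\<lambda>i. (i, \<sigma> i)) ` {i. \<sigma> i \<noteq> i}"
    unfolding Tc_def by auto
  then show ?thesis
    by (simp add: card_image inj_on_def)
qed

lemma card_Tc_Int: "card (Tc \<sigma> \<inter> Tc p) = card (agreement p \<sigma>)"
proof -
  have "Tc \<sigma> \<inter> Tc p = (\<lambda>i. (i, \<sigma> i)) ` agreement p \<sigma>"
    unfolding Tc_def agreement_def by auto
  then show ?thesis
    by (simp add: card_image inj_on_def)
qed

lemma bij_image_moved_points:
  assumes "bij \<sigma>"
  shows "\<sigma> ` {i. \<sigma> i \<noteq> i} = {i. \<sigma> i \<noteq> i}"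
proof
  have inj: "inj \<sigma>" and surj: "surj \<sigma>"
    using assms by (auto simp: bij_def)
  show "\<sigma> ` {i. \<sigma> i \<noteq> i} \<subseteq> {i. \<sigma> i \<noteq> i}"
    using inj by (auto simp: inj_eq)
  show "{i. \<sigma> i \<noteq> i} \<subseteq> \<sigma> ` {i. \<sigma> i \<noteq> i}"
  proof
    fix x assume x: "x \<in> {i. \<sigma> i \<noteq> i}"
    have x_eq: "\<sigma> (inv \<sigma> x) = x"
      using surj by (rule surj_f_inv_f)
    with x have "inv \<sigma> x \<in> {i. \<sigma> i \<noteq> i}"
      by auto
    then show "x \<in> \<sigma> ` {i. \<sigma> i \<noteq> i}"
      by (rule image_eqI[of x \<sigma> "inv \<sigma> x", OF x_eq[symmetric]])
  qed
qed

lemma agreement_boundary: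
  assumes "bij \<sigma>" and moved: "{i. \<sigma> i \<noteq> i} = insert j (agreement p \<sigma>)"
    and j: "j \<notin> agreement p \<sigma>"
  shows "p ` agreement p \<sigma> - agreement p \<sigma> = {j}"
    and "agreement p \<sigma> - p ` agreement p \<sigma> = {\<sigma> j}"
proof -
  let ?D = "agreement p \<sigma>"
  have "\<sigma> ` ?D = p ` ?D"
    unfolding agreement_def by auto
  moreover have "\<sigma> ` insert j ?D = insert j ?D"
    using bij_image_moved_points[OF assms(1)] moved by simp
  ultimately have image: "insert (\<sigma> j) (p ` ?D) = insert j ?D"
    by simp
  have "\<sigma> j \<noteq> j"
    using moved by auto
  with image have "j \<in> p ` ?D" and "\<sigma> j \<in> ?D"
    by (metis insertE insertI1)+
  moreover have "\<sigma> j \<notin> p ` ?D"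
    using j \<open>\<sigma> ` ?D = p ` ?D\<close> bij_is_inj[OF assms(1)] by (metis imageE inj_eq)
  ultimately show "p ` ?D - ?D = {j}" and "?D - p ` ?D = {\<sigma> j}"
    using image j by auto
qed

section \<open>Families of cycles of prescribed total size\<close>

definition fillings :: "nat set set \<Rightarrow> nat \<Rightarrow> nat \<Rightarrow> nat set set set" where
  "fillings K e R = {F. F \<subseteq> K \<and> e + (\<Sum>C\<in>F. card C) = R}"

lemma finite_fillings: "finite K \<Longrightarrow> finite (fillings K e R)"
  unfolding fillings_def by (rule finite_subset[of _ "Pow K"]) auto

lemma sum_card_insert:
  assumes "finite K" and "X \<notin> K" and "G \<subseteq> K"
  shows "(\<Sum>C\<in>insert X G. card C) = card X + (\<Sum>C\<in>G. card C)"
  using assms finite_subset by (subst sum.insert) auto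

lemma fillings_insert:
  assumes K: "finite K" and X: "X \<notin> K"
  shows "fillings (insert X K) e R = fillings K e R \<union> insert X ` fillings K (e + card X) R"
proof
  show "fillings (insert X K) e R \<subseteq> fillings K e R \<union> insert X ` fillings K (e + card X) R"
  proof
    fix F assume F: "F \<in> fillings (insert X K) e R"
    show "F \<in> fillings K e R \<union> insert X ` fillings K (e + card X) R"
    proof (cases "X \<in> F")
      case True
      then have "F = insert X (F - {X})" and "F - {X} \<subseteq> K"
        using F unfolding fillings_def by auto
      then have "F - {X} \<in> fillings K (e + card X) R"
        using F sum_card_insert[OF K X, of "F - {X}"] unfolding fillings_def by auto
      with \<open>F = insert X (F - {X})\<close> show ?thesis
        by blast
    next
      case False
      then show ?thesis
        using F unfolding fillings_def by auto
    qed
  qed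
  show "fillings K e R \<union> insert X ` fillings K (e + card X) R \<subseteq> fillings (insert X K) e R"
    using sum_card_insert[OF K X] unfolding fillings_def by auto
qed

lemma card_fillings_insert:
  assumes K: "finite K" and X: "X \<notin> K"
  shows "card (fillings (insert X K) e R) = card (fillings K e R) + card (fillings K (e + card X) R)"
proof -
  have "fillings K e R \<inter> insert X ` fillings K (e + card X) R = {}"
    using X unfolding fillings_def by auto
  moreover have "inj_on (insert X) (fillings K (e + card X) R)"
  proof (rule inj_onI)
    fix F G
    assume "F \<in> fillings K (e + card X) R" and "G \<in> fillings K (e + card X) R"
    then have "X \<notin> F" and "X \<notin> G"
      using X unfolding fillings_def by auto
    moreover assume "insert X F = insert X G"
    ultimately show "F = G"
      by (metis Diff_insert_absorb)
  qed
  ultimately show ?thesis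
    unfolding fillings_insert[OF K X] using K by (simp add: card_Un_disjoint finite_fillings card_image)
qed

text \<open>The number of families of 2-cycles, chosen among \<open>q\<close> given ones, that bring the size \<open>e\<close>
  up to \<open>R\<close>; for \<open>e > R\<close> the negative argument makes \<open>binomz\<close> vanish.\<close>

definition pair_count :: "nat \<Rightarrow> nat \<Rightarrow> nat \<Rightarrow> int" where
  "pair_count q R e = (if even (R + e) then binomz (int q) ((int R - int e) div 2) else 0)"

lemma card_fillings_pairs:
  assumes K: "finite K" and pairs: "\<forall>C\<in>K. card C = 2"
  shows "int (card (fillings K e R)) = pair_count (card K) R e"
proof -
  have "(\<Sum>C\<in>F. card C) = 2 * card F" if "F \<subseteq> K" for F
    using that pairs by (simp add: subset_iff)
  then have fillings: "fillings K e R = {F. F \<subseteq> K \<and> e + 2 * card F = R}"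
    unfolding fillings_def by auto
  show ?thesis
  proof (cases "even (R + e) \<and> e \<le> R")
    case True
    then obtain k where R: "R = e + 2 * k"
      by (metis add_diff_cancel_left' dvd_def even_diff_nat le_add_diff_inverse)
    then have "fillings K e R = {F. F \<subseteq> K \<and> card F = k}"
      unfolding fillings by auto
    then show ?thesis
      using n_subsets[OF K, of k] R unfolding pair_count_def binomz_def by simp
  next
    case False
    then have "fillings K e R = {}"
      unfolding fillings by auto
    moreover have "pair_count (card K) R e = 0"
      using False unfolding pair_count_def binomz_def by auto
    ultimately show ?thesis
      by simp
  qed
qed

section \<open>The agreement sets of a permutation in \<open>Sym n\<close>\<close>

locale Sym_member =
  fixes p :: "nat \<Rightarrow> nat" and n :: nat
  assumes Sym: "p \<in> Sym n"
begin

lemma permutes: "p permutes {1..n}"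
  using Sym unfolding Sym_def by simp

lemma permutation: "permutation p"
  using permutes permutation_permutes by blast

definition moved :: "nat set" where
  "moved = {i. p i \<noteq> i}"

lemma moved_subset: "moved \<subseteq> {1..n}"
  unfolding moved_def using permutes_not_in[OF permutes] by blast

lemma finite_moved: "finite moved"
  unfolding moved_def using permutation by (rule permutation_finite_support)

lemma image_moved: "p ` moved = moved"
  unfolding moved_def using permutation by (simp add: bij_image_moved_points permutation_bijective)

lemma moved_in_range: "moved = {i \<in> {1..n}. p i \<noteq> i}"
  using moved_subset unfolding moved_def by auto

lemma wH_eq_card_moved: "wH n p = card moved"
  unfolding wH_def moved_in_range ..

lemma self_in_orbit: "x \<in> orbit p x"
  using permutation by (rule permutation_self_in_orbit)

lemma orbit_eq: "y \<in> orbit p x \<Longrightarrow> orbit p y = orbit p x"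
  using cyclic_on_orbit'[OF permutation] by (rule orbit_cyclic_eq3)

lemma orbits_disjoint:
  assumes "orbit p x \<noteq> orbit p y"
  shows "orbit p x \<inter> orbit p y = {}"
proof (rule ccontr)
  assume "orbit p x \<inter> orbit p y \<noteq> {}"
  then obtain z where "z \<in> orbit p x" and "z \<in> orbit p y"
    by blast
  then show False
    using orbit_eq[of z x] orbit_eq[of z y] assms by simp
qed

lemma image_orbit: "p ` orbit p x = orbit p x"
proof
  show "p ` orbit p x \<subseteq> orbit p x"
    by (rule image_subsetI) (rule orbit.step)
  show "orbit p x \<subseteq> p ` orbit p x"
  proof
    fix y assume "y \<in> orbit p x"
    then have "y \<in> orbit (inv p) x"
      using orbit_inv_eq[OF permutation] by simp
    then have "inv p y \<in> orbit (inv p) x"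
      by (rule orbit.step)
    then have "inv p y \<in> orbit p x"
      using orbit_inv_eq[OF permutation] by simp
    moreover have "y = p (inv p y)"
      using permutation by (simp add: permutation_bijective bij_is_surj surj_f_inv_f)
    ultimately show "y \<in> p ` orbit p x"
      by blast
  qed
qed

lemma orbit_subset_moved:
  assumes "x \<in> moved"
  shows "orbit p x \<subseteq> moved"
proof
  fix y assume y: "y \<in> orbit p x"
  show "y \<in> moved"
  proof (rule ccontr)
    assume "y \<notin> moved"
    then have "orbit p y = {y}"
      unfolding moved_def orbit_eq_singleton_iff by simp
    then have "x = y"
      using orbit_eq[OF y] self_in_orbit[of x] by blast
    with assms \<open>y \<notin> moved\<close> show False
      by simp
  qed
qed

lemma card_orbit: "card (orbit p x) = funpow_dist1 p x x"
proof -
  have "inj_on (\<lambda>k. (p ^^ k) x) {0..<funpow_dist1 p x x}"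
    using inj_on_funpow_dist1[OF self_in_orbit] .
  then show ?thesis
    unfolding orbit_conv_funpow_dist1[OF self_in_orbit] by (simp add: card_image)
qed

lemma orbit_funpow: "orbit p x = (\<lambda>k. (p ^^ k) x) ` {0..<card (orbit p x)}"
  unfolding card_orbit by (rule orbit_conv_funpow_dist1[OF self_in_orbit])

lemma funpow_card_orbit: "(p ^^ card (orbit p x)) x = x"
  unfolding card_orbit by (rule funpow_dist1_prop[OF self_in_orbit])

lemma funpow_eq_iff:
  "k < card (orbit p x) \<Longrightarrow> l < card (orbit p x) \<Longrightarrow> (p ^^ k) x = (p ^^ l) x \<longleftrightarrow> k = l"
  using inj_on_funpow_dist1[OF self_in_orbit, of x] unfolding card_orbit inj_on_def by auto

definition cycles :: "nat set set" where
  "cycles = orbit p ` moved"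

lemma nontriv_cycles_eq: "nontriv_cycles n p = cycles"
  unfolding nontriv_cycles_def cycles_def moved_in_range by blast

lemma finite_cycles: "finite cycles"
  unfolding cycles_def using finite_moved by simp

lemma moved_eq_Union_cycles: "moved = \<Union> cycles"
  unfolding cycles_def using orbit_subset_moved self_in_orbit by blast

lemma cycles_disjoint: "C \<in> cycles \<Longrightarrow> C' \<in> cycles \<Longrightarrow> C \<noteq> C' \<Longrightarrow> C \<inter> C' = {}"
  unfolding cycles_def using orbits_disjoint by blast

lemma finite_cycle: "C \<in> cycles \<Longrightarrow> finite C"
  using finite_moved moved_eq_Union_cycles by (metis Union_upper finite_subset)

lemma image_cycle: "C \<in> cycles \<Longrightarrow> p ` C = C"
  unfolding cycles_def using image_orbit by blast

lemma cycle_eq_orbit: "C \<in> cycles \<Longrightarrow> x \<in> C \<Longrightarrow> orbit p x = C"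
  unfolding cycles_def using orbit_eq by blast

lemma orbit_in_cycles: "x \<in> moved \<Longrightarrow> orbit p x \<in> cycles"
  unfolding cycles_def by blast

lemma card_Union_cycles:
  assumes "F \<subseteq> cycles"
  shows "card (\<Union> F) = (\<Sum>C\<in>F. card C)"
proof (rule card_Union_disjoint)
  show "pairwise disjnt F"
    using assms cycles_disjoint by (auto simp: pairwise_def disjnt_def)
  show "C \<in> F \<Longrightarrow> finite C" for C
    using assms finite_cycle by blast
qed

lemma wH_eq_sum_cycles: "wH n p = (\<Sum>C\<in>cycles. card C)"
  unfolding wH_eq_card_moved moved_eq_Union_cycles by (simp add: card_Union_cycles)

definition admissible :: "nat \<Rightarrow> nat set set" where
  "admissible R = {D. D \<subseteq> moved \<and> card D = R \<and>
     (\<exists>j a. p ` D - D = {j} \<and> D - p ` D = {a} \<and> p j \<noteq> a)}"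

text \<open>The candidate \<open>\<sigma>\<close> with agreement set \<open>D\<close>: it follows \<open>p\<close> on \<open>D\<close> and sends the point by
  which \<open>p\<close> leaves \<open>D\<close> to the point by which it enters \<open>D\<close>.\<close>
definition completion :: "nat set \<Rightarrow> nat \<Rightarrow> nat" where
  "completion D x =
     (if x \<in> D then p x else if x = the_elem (p ` D - D) then the_elem (D - p ` D) else x)"

lemma agreement_admissible:
  assumes \<sigma>: "\<sigma> permutes {1..n}" and card_moved: "card {i. \<sigma> i \<noteq> i} = Suc R"
    and card_agreement: "card (agreement p \<sigma>) = R"
  shows "agreement p \<sigma> \<in> admissible R" and "completion (agreement p \<sigma>) = \<sigma>"
proof -
  define D where "D = agreement p \<sigma>"
  have bij: "bij \<sigma>"
    using \<sigma> by (rule permutes_bij)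
  have "finite {i. \<sigma> i \<noteq> i}"
    using permutation_finite_support[OF permutes_imp_permutation[OF finite_atLeastAtMost \<sigma>]] .
  moreover have D_sub: "D \<subseteq> {i. \<sigma> i \<noteq> i}"
    unfolding D_def agreement_def by auto
  ultimately have "card ({i. \<sigma> i \<noteq> i} - D) = 1"
    using card_moved card_agreement by (simp add: card_Diff_subset finite_subset D_def)
  then obtain j where "{i. \<sigma> i \<noteq> i} - D = {j}"
    by (rule card_1_singletonE)
  then have moved_\<sigma>: "{i. \<sigma> i \<noteq> i} = insert j D" and j: "j \<notin> D"
    using D_sub by auto
  have boundary: "p ` D - D = {j}" "D - p ` D = {\<sigma> j}"
    using agreement_boundary[OF bij, of j p] moved_\<sigma> j unfolding D_def by simp_all
  have "p j \<noteq> \<sigma> j"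
    using moved_\<sigma> j unfolding D_def agreement_def by auto
  moreover have "D \<subseteq> moved"
    unfolding D_def agreement_def moved_def by auto
  ultimately show "agreement p \<sigma> \<in> admissible R"
    using boundary card_agreement unfolding admissible_def D_def by blast
  show "completion (agreement p \<sigma>) = \<sigma>"
  proof
    fix x
    show "completion (agreement p \<sigma>) x = \<sigma> x"
      using boundary moved_\<sigma> unfolding completion_def D_def[symmetric]
      by (auto simp: D_def agreement_def)
  qed
qed

lemma completion_eq:
  assumes "p ` D - D = {j}" and "D - p ` D = {a}"
  shows "completion D x = (if x \<in> D then p x else if x = j then a else x)"
  unfolding completion_def assms by simp

lemma completion_permutes:
  assumes D_moved: "D \<subseteq> moved" and out: "p ` D - D = {j}" and into: "D - p ` D = {a}"
  shows "completion D permutes {1..n}"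
proof -
  note completion = completion_eq[OF out into]
  have j: "j \<notin> D" "j \<in> p ` D" and a: "a \<in> D" "a \<notin> p ` D"
    using out into by auto
  have "p ` D \<subseteq> moved"
    using image_mono[OF D_moved, of p] image_moved by simp
  then have support: "insert j D \<subseteq> moved"
    using D_moved j by blast
  have "p ` D \<subseteq> insert j D"
    using out by blast
  then have "completion D ` insert j D \<subseteq> insert j D"
    using a by (auto simp: completion)
  moreover have inj: "inj_on (completion D) (insert j D)"
  proof (rule inj_onI)
    fix x y
    assume x: "x \<in> insert j D" and y: "y \<in> insert j D"
      and eq: "completion D x = completion D y"
    have "p z \<noteq> a" if "z \<in> D" for z
      using a that by blast
    with x y eq j show "x = y"
      using permutes_inj[OF permutes] by (cases "x \<in> D"; cases "y \<in> D") (auto simp: completion inj_eq)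
  qed
  moreover have "finite (insert j D)"
    using finite_moved support by (rule finite_subset[rotated])
  ultimately have "completion D ` insert j D = insert j D"
    by (intro endo_inj_surj)
  with inj have "bij_betw (completion D) (insert j D) (insert j D)"
    by (simp add: bij_betw_def)
  then have "completion D permutes insert j D"
    by (rule bij_imp_permutes) (simp add: completion j)
  then show ?thesis
    by (rule permutes_subset) (use support moved_subset in blast)
qed

lemma completion_admissible:
  assumes "D \<in> admissible R"
  shows "completion D permutes {1..n}" and "card {i. completion D i \<noteq> i} = Suc R"
    and "agreement p (completion D) = D"
proof -
  obtain j a where D_moved: "D \<subseteq> moved" and card_D: "card D = R"
    and out: "p ` D - D = {j}" and into: "D - p ` D = {a}" and "p j \<noteq> a"
    using assms unfolding admissible_def by blast
  note completion = completion_eq[OF out into]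
  show "completion D permutes {1..n}"
    using D_moved out into by (rule completion_permutes)
  have j: "j \<notin> D" and "a \<noteq> j" and moved_D: "\<And>x. x \<in> D \<Longrightarrow> p x \<noteq> x"
    using out into D_moved unfolding moved_def by auto
  then have "{i. completion D i \<noteq> i} = insert j D"
    by (auto simp: completion)
  then show "card {i. completion D i \<noteq> i} = Suc R"
    using j card_D finite_subset[OF D_moved finite_moved] by simp
  show "agreement p (completion D) = D"
    using \<open>p j \<noteq> a\<close> moved_D j by (auto simp: agreement_def completion)
qed

lemma card_N3_eq_card_admissible:
  assumes "wH n p = 2 * r - 1" and "r \<ge> 1"
  shows "card (N3 n p) = card (admissible (r - 1))"
proof -
  have N3: "N3 n p = {\<sigma>. \<sigma> permutes {1..n} \<and> card (agreement p \<sigma>) = r - 1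
                          \<and> card {i. \<sigma> i \<noteq> i} = Suc (r - 1)}"
    using assms unfolding N3_def Sym_def card_Tc card_Tc_Int by auto
  have "bij_betw (agreement p) (N3 n p) (admissible (r - 1))"
  proof (rule bij_betw_byWitness[where f' = completion])
    show "\<forall>\<sigma>\<in>N3 n p. completion (agreement p \<sigma>) = \<sigma>"
      and "agreement p ` N3 n p \<subseteq> admissible (r - 1)"
      unfolding N3 using agreement_admissible by auto
    have "card D = r - 1" if "D \<in> admissible (r - 1)" for D
      using that unfolding admissible_def by simp
    then show "\<forall>D\<in>admissible (r - 1). agreement p (completion D) = D"
      and "completion ` admissible (r - 1) \<subseteq> N3 n p"
      unfolding N3 using completion_admissible by auto
  qed
  then show ?thesis
    by (rule bij_betw_same_card)
qed

definition arc :: "nat \<Rightarrow> nat \<Rightarrow> nat set" where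
  "arc a d = (\<lambda>k. (p ^^ k) a) ` {0..<d}"

lemma arc_subset_orbit: "arc a d \<subseteq> orbit p a"
  unfolding arc_def using funpow_in_orbit[OF self_in_orbit] by blast

lemma card_arc: "d \<le> card (orbit p a) \<Longrightarrow> card (arc a d) = d"
  unfolding arc_def by (subst card_image) (auto simp: inj_on_def funpow_eq_iff)

lemma arc_boundary:
  assumes "1 \<le> d" and "d < card (orbit p a)"
  shows "p ` arc a d - arc a d = {(p ^^ d) a}" and "arc a d - p ` arc a d = {a}"
proof -
  define f where "f k = (p ^^ k) a" for k
  have arc: "arc a d = f ` {0..<d}"
    by (simp add: arc_def f_def)
  have "p ` f ` {0..<d} = f ` Suc ` {0..<d}"
    unfolding image_image f_def by simp
  then have p_arc: "p ` f ` {0..<d} = f ` {1..<Suc d}"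
    by (metis One_nat_def image_Suc_atLeastLessThan)
  have inj: "inj_on f {0..d}"
    using assms(2) by (auto simp: inj_on_def funpow_eq_iff f_def)
  have "p ` arc a d - arc a d = f ` ({1..<Suc d} - {0..<d})"
    unfolding arc p_arc by (rule inj_on_image_set_diff[OF inj, symmetric]) auto
  also have "{1..<Suc d} - {0..<d} = {d}"
    using assms(1) by auto
  finally show "p ` arc a d - arc a d = {(p ^^ d) a}"
    by (simp add: f_def)
  have "arc a d - p ` arc a d = f ` ({0..<d} - {1..<Suc d})"
    unfolding arc p_arc by (rule inj_on_image_set_diff[OF inj, symmetric]) auto
  also have "{0..<d} - {1..<Suc d} = {0}"
    using assms(1) by auto
  finally show "arc a d - p ` arc a d = {a}"
    by (simp add: f_def)
qed

lemma Union_cycles_disjoint_orbit: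
  assumes "a \<in> moved" and "F \<subseteq> cycles - {orbit p a}"
  shows "\<Union> F \<inter> orbit p a = {}"
  using assms cycles_disjoint orbit_in_cycles by blast

lemma image_Union_cycles:
  assumes "F \<subseteq> cycles"
  shows "p ` \<Union> F = \<Union> F"
proof -
  have "p ` \<Union> F = (\<Union>C\<in>F. p ` C)"
    by (rule image_Union)
  also have "\<dots> = (\<Union>C\<in>F. C)"
    using assms image_cycle by (intro SUP_cong) auto
  finally show ?thesis
    by simp
qed

lemma card_Union_cycles_Un_arc:
  assumes a: "a \<in> moved" and d: "d \<le> card (orbit p a)"
    and F: "F \<subseteq> cycles - {orbit p a}"
  shows "card (\<Union> F \<union> arc a d) = d + (\<Sum>C\<in>F. card C)"
proof -
  have F_cycles: "F \<subseteq> cycles"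
    using F by blast
  then have "finite F"
    using finite_cycles by (rule finite_subset)
  moreover have "\<forall>C\<in>F. finite C"
    using F_cycles finite_cycle by blast
  ultimately have "finite (\<Union> F)"
    by blast
  moreover have "finite (arc a d)"
    unfolding arc_def by simp
  moreover have "\<Union> F \<inter> arc a d = {}"
    using Union_cycles_disjoint_orbit[OF a F] arc_subset_orbit[of a d] by blast
  ultimately have "card (\<Union> F \<union> arc a d) = card (\<Union> F) + card (arc a d)"
    by (rule card_Un_disjoint)
  then show ?thesis
    using card_Union_cycles[OF F_cycles] card_arc[OF d] by simp
qed

lemma Union_Un_arc_boundary:
  assumes a: "a \<in> moved" and d: "1 \<le> d" "d < card (orbit p a)"
    and F: "F \<subseteq> cycles - {orbit p a}"
  shows "p ` (\<Union> F \<union> arc a d) - (\<Union> F \<union> arc a d) = {(p ^^ d) a}"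
    and "(\<Union> F \<union> arc a d) - p ` (\<Union> F \<union> arc a d) = {a}"
proof -
  let ?D = "\<Union> F \<union> arc a d"
  have disjoint: "\<Union> F \<inter> orbit p a = {}"
    using a F by (rule Union_cycles_disjoint_orbit)
  have "p ` arc a d \<subseteq> orbit p a"
    using image_mono[OF arc_subset_orbit, of p a d] image_orbit by simp
  then have "p ` arc a d \<inter> \<Union> F = {}" and "arc a d \<inter> \<Union> F = {}"
    using disjoint arc_subset_orbit[of a d] by blast+
  moreover have "p ` ?D = \<Union> F \<union> p ` arc a d"
    using image_Union_cycles[of F] F by (auto simp: image_Un)
  ultimately have "p ` ?D - ?D = p ` arc a d - arc a d" and "?D - p ` ?D = arc a d - p ` arc a d"
    by auto
  then show "p ` ?D - ?D = {(p ^^ d) a}" and "?D - p ` ?D = {a}"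
    using arc_boundary[OF d] by simp_all
qed

lemma arc_union_admissible:
  assumes a: "a \<in> moved" and d: "1 \<le> d" "d + 2 \<le> card (orbit p a)"
    and F: "F \<subseteq> cycles - {orbit p a}"
  shows "\<Union> F \<union> arc a d \<in> admissible (d + (\<Sum>C\<in>F. card C))"
proof -
  let ?D = "\<Union> F \<union> arc a d"
  have "\<Union> F \<subseteq> moved"
    unfolding moved_eq_Union_cycles using F by blast
  then have "?D \<subseteq> moved"
    using arc_subset_orbit[of a d] orbit_subset_moved[OF a] by blast
  moreover have "card ?D = d + (\<Sum>C\<in>F. card C)"
    using a _ F by (rule card_Union_cycles_Un_arc) (use d in simp)
  moreover have "p ((p ^^ d) a) \<noteq> a"
    using funpow_eq_iff[of "Suc d" a 0] d(2) by simp
  moreover note Union_Un_arc_boundary[OF a d(1) _ F]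
  ultimately show ?thesis
    using d(2) unfolding admissible_def by auto
qed

lemma funpow_notin_after_exit:
  assumes into: "D - p ` D \<subseteq> {a}" and exit: "(p ^^ d) a \<notin> D"
    and "d \<le> m" and "m < card (orbit p a)"
  shows "(p ^^ m) a \<notin> D"
  using assms(3,4)
proof (induction m)
  case 0
  then show ?case
    using exit by simp
next
  case (Suc m)
  show ?case
  proof (cases "d = Suc m")
    case True
    then show ?thesis
      using exit by simp
  next
    case False
    then have IH: "(p ^^ m) a \<notin> D"
      using Suc by simp
    show ?thesis
    proof
      assume in_D: "(p ^^ Suc m) a \<in> D"
      have "(p ^^ Suc m) a \<noteq> a"
        using funpow_eq_iff[of "Suc m" a 0] Suc.prems by simp
      with in_D into have "(p ^^ Suc m) a \<in> p ` D"
        by blast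
      then obtain z where "z \<in> D" and "p z = p ((p ^^ m) a)"
        by auto
      then show False
        using IH permutes_inj[OF permutes] by (simp add: inj_eq)
    qed
  qed
qed

lemma orbit_subset_if_escape_outside:
  assumes out: "p ` D - D \<subseteq> {j}" and y: "y \<in> D" and j: "j \<notin> orbit p y"
  shows "orbit p y \<subseteq> D"
proof -
  have "(p ^^ k) y \<in> D" for k
  proof (induction k)
    case 0
    show ?case
      using y by simp
  next
    case (Suc k)
    have "(p ^^ Suc k) y \<noteq> j"
      using j funpow_in_orbit[OF self_in_orbit, of "Suc k" y] by blast
    then show ?case
      using Suc.IH out by auto
  qed
  then show ?thesis
    using orbit_altdef_permutation[OF permutation] by auto
qed

lemma funpow_pred_card_orbit: "p ((p ^^ (card (orbit p a) - 1)) a) = a"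
proof -
  have "0 < card (orbit p a)"
    using finite_orbit[OF self_in_orbit] self_in_orbit[of a] by (auto simp: card_gt_0_iff)
  then show ?thesis
    using funpow_card_orbit[of a] by (metis Suc_pred' funpow.simps(2) o_apply)
qed

lemma admissible_exit:
  assumes out: "p ` D - D = {j}" and into: "D - p ` D = {a}"
  shows "\<exists>d. 1 \<le> d \<and> d < card (orbit p a) \<and> (p ^^ d) a = j \<and> (\<forall>k<d. (p ^^ k) a \<in> D)"
proof -
  have "a \<notin> p ` D"
    using into by auto
  then have last: "(p ^^ (card (orbit p a) - 1)) a \<notin> D"
    using funpow_pred_card_orbit[of a] by (metis imageI)
  define d where "d = (LEAST k. (p ^^ k) a \<notin> D)"
  have exit: "(p ^^ d) a \<notin> D"
    unfolding d_def using last by (rule LeastI)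
  have before: "(p ^^ k) a \<in> D" if "k < d" for k
    using that not_less_Least unfolding d_def by blast
  have "d \<le> card (orbit p a) - 1"
    unfolding d_def using last by (rule Least_le)
  moreover have "d \<noteq> 0"
    using into exit by (cases d) auto
  ultimately have "1 \<le> d" and "d < card (orbit p a)"
    by linarith+
  then obtain d' where "d = Suc d'"
    using not0_implies_Suc by fastforce
  then have "(p ^^ d) a \<in> p ` D"
    using before by auto
  with exit out have "(p ^^ d) a = j"
    by blast
  with \<open>1 \<le> d\<close> \<open>d < card (orbit p a)\<close> before show ?thesis
    by blast
qed

lemma admissible_inter_orbit:
  assumes out: "p ` D - D = {j}" and into: "D - p ` D = {a}" and "p j \<noteq> a"
  obtains d where "1 \<le> d" and "d + 2 \<le> card (orbit p a)" and "(p ^^ d) a = j"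
    and "D \<inter> orbit p a = arc a d"
proof -
  obtain d where d: "1 \<le> d" "d < card (orbit p a)" and j_eq: "(p ^^ d) a = j"
    and before: "\<And>k. k < d \<Longrightarrow> (p ^^ k) a \<in> D"
    using admissible_exit[OF out into] by blast
  define c where "c = card (orbit p a)"
  note d = d[folded c_def]
  have exit: "(p ^^ d) a \<notin> D"
    using j_eq out by blast
  have "d + 1 \<noteq> c"
  proof
    assume "d + 1 = c"
    then have "p j = (p ^^ c) a"
      using j_eq by auto
    then show False
      using \<open>p j \<noteq> a\<close> funpow_card_orbit[of a] unfolding c_def by simp
  qed
  with d have "d + 2 \<le> c"
    by linarith
  have "D \<inter> orbit p a = arc a d"
  proof
    show "arc a d \<subseteq> D \<inter> orbit p a"
      using before arc_subset_orbit[of a d] unfolding arc_def by auto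
    show "D \<inter> orbit p a \<subseteq> arc a d"
    proof
      fix y assume y: "y \<in> D \<inter> orbit p a"
      then have "y \<in> (\<lambda>k. (p ^^ k) a) ` {0..<c}"
        unfolding c_def by (metis IntD2 orbit_funpow)
      then obtain k where k: "k < c" and y_eq: "y = (p ^^ k) a"
        by auto
      have "k < d"
        using funpow_notin_after_exit[OF _ exit, of k] into y y_eq k unfolding c_def
        by (metis Int_iff equalityD1 not_less)
      then show "y \<in> arc a d"
        unfolding arc_def y_eq by simp
    qed
  qed
  with d(1) \<open>d + 2 \<le> c\<close> j_eq show thesis
    unfolding c_def by (intro that) simp_all
qed

text \<open>A triple \<open>(a, d, F)\<close> encodes the agreement set \<open>\<Union>F \<union> arc a d\<close>.\<close>
definition arc_data :: "nat \<Rightarrow> (nat \<times> nat \<times> nat set set) set" where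
  "arc_data R = (SIGMA a:moved. SIGMA d:{1..card (orbit p a) - 2}.
     fillings (cycles - {orbit p a}) d R)"

lemma cycles_in_Union_Un_arc:
  assumes a: "a \<in> moved" and F: "F \<subseteq> cycles - {orbit p a}"
  shows "{C \<in> cycles - {orbit p a}. C \<subseteq> \<Union> F \<union> arc a d} = F"
proof
  show "F \<subseteq> {C \<in> cycles - {orbit p a}. C \<subseteq> \<Union> F \<union> arc a d}"
    using F by blast
  show "{C \<in> cycles - {orbit p a}. C \<subseteq> \<Union> F \<union> arc a d} \<subseteq> F"
  proof
    fix C assume C: "C \<in> {C \<in> cycles - {orbit p a}. C \<subseteq> \<Union> F \<union> arc a d}"
    then obtain y where y: "y \<in> C"
      using self_in_orbit unfolding cycles_def by blast
    have "C \<inter> orbit p a = {}"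
      using C cycles_disjoint orbit_in_cycles[OF a] by blast
    then obtain C' where C': "C' \<in> F" "y \<in> C'"
      using y C arc_subset_orbit[of a d] by blast
    then have "C' = C"
      using C F cycles_disjoint y by blast
    with C' show "C \<in> F"
      by simp
  qed
qed

lemma Union_Un_arc_inter_orbit:
  assumes "a \<in> moved" and "F \<subseteq> cycles - {orbit p a}"
  shows "(\<Union> F \<union> arc a d) \<inter> orbit p a = arc a d"
  using Union_cycles_disjoint_orbit[OF assms] arc_subset_orbit[of a d] by blast

lemma Union_Un_arc_inj:
  assumes "(a, d, F) \<in> arc_data R" and "(a', d', F') \<in> arc_data R"
    and eq: "\<Union> F \<union> arc a d = \<Union> F' \<union> arc a' d'"
  shows "(a, d, F) = (a', d', F')"
proof -
  have a: "a \<in> moved" and d: "1 \<le> d" "d + 2 \<le> card (orbit p a)"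
    and F: "F \<subseteq> cycles - {orbit p a}"
    using assms(1) unfolding arc_data_def fillings_def by auto
  have a': "a' \<in> moved" and d': "1 \<le> d'" "d' + 2 \<le> card (orbit p a')"
    and F': "F' \<subseteq> cycles - {orbit p a'}"
    using assms(2) unfolding arc_data_def fillings_def by auto
  have "{a} = {a'}"
    using Union_Un_arc_boundary(2)[OF a d(1) _ F] Union_Un_arc_boundary(2)[OF a' d'(1) _ F'] d d' eq
    by simp
  then have "a = a'"
    by simp
  have "arc a d = (\<Union> F \<union> arc a d) \<inter> orbit p a"
    using Union_Un_arc_inter_orbit[OF a F] by simp
  also have "\<dots> = (\<Union> F' \<union> arc a' d') \<inter> orbit p a'"
    by (subst eq) (simp only: \<open>a = a'\<close>)
  also have "\<dots> = arc a' d'"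
    using Union_Un_arc_inter_orbit[OF a' F'] .
  finally have "d = d'"
    using card_arc[of d a] card_arc[of d' a'] d(2) d'(2) by simp
  have "F = {C \<in> cycles - {orbit p a}. C \<subseteq> \<Union> F \<union> arc a d}"
    using cycles_in_Union_Un_arc[OF a F] by simp
  also have "\<dots> = {C \<in> cycles - {orbit p a'}. C \<subseteq> \<Union> F' \<union> arc a' d'}"
    by (subst eq) (simp only: \<open>a = a'\<close>)
  also have "\<dots> = F'"
    using cycles_in_Union_Un_arc[OF a' F'] .
  finally have "F = F'" .
  with \<open>a = a'\<close> \<open>d = d'\<close> show ?thesis
    by simp
qed

lemma eq_Union_cycles_Un_arc:
  assumes D: "D \<subseteq> moved" and out: "p ` D - D = {j}" and j: "j \<in> orbit p a"
    and D_orbit: "D \<inter> orbit p a = arc a d"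
  shows "D = \<Union> {C \<in> cycles - {orbit p a}. C \<subseteq> D} \<union> arc a d"
proof
  show "\<Union> {C \<in> cycles - {orbit p a}. C \<subseteq> D} \<union> arc a d \<subseteq> D"
    using D_orbit by blast
  show "D \<subseteq> \<Union> {C \<in> cycles - {orbit p a}. C \<subseteq> D} \<union> arc a d"
  proof
    fix y assume y: "y \<in> D"
    show "y \<in> \<Union> {C \<in> cycles - {orbit p a}. C \<subseteq> D} \<union> arc a d"
    proof (cases "y \<in> orbit p a")
      case True
      then show ?thesis
        using y D_orbit by blast
    next
      case False
      then have "orbit p y \<noteq> orbit p a"
        using self_in_orbit[of y] by auto
      then have "j \<notin> orbit p y"
        using j orbits_disjoint by blast
      then have "orbit p y \<subseteq> D"
        using out y by (intro orbit_subset_if_escape_outside) auto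
      moreover have "orbit p y \<in> cycles"
        using y D orbit_in_cycles by blast
      ultimately show ?thesis
        using \<open>orbit p y \<noteq> orbit p a\<close> self_in_orbit[of y] by blast
    qed
  qed
qed

lemma admissible_eq_Union_Un_arc:
  assumes "D \<in> admissible R"
  obtains a d F where "(a, d, F) \<in> arc_data R" and "D = \<Union> F \<union> arc a d"
proof -
  obtain j a where D: "D \<subseteq> moved" "card D = R" and out: "p ` D - D = {j}"
    and into: "D - p ` D = {a}" and "p j \<noteq> a"
    using assms unfolding admissible_def by blast
  obtain d where d: "1 \<le> d" "d + 2 \<le> card (orbit p a)" and j: "(p ^^ d) a = j"
    and D_orbit: "D \<inter> orbit p a = arc a d"
    using out into \<open>p j \<noteq> a\<close> by (rule admissible_inter_orbit)
  have a: "a \<in> moved"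
    using into D(1) by blast
  have "j \<in> orbit p a"
    unfolding j[symmetric] using self_in_orbit by (rule funpow_in_orbit)
  define F where "F = {C \<in> cycles - {orbit p a}. C \<subseteq> D}"
  have F: "F \<subseteq> cycles - {orbit p a}"
    unfolding F_def by blast
  have D_eq: "D = \<Union> F \<union> arc a d"
    unfolding F_def using D(1) out \<open>j \<in> orbit p a\<close> D_orbit by (rule eq_Union_cycles_Un_arc)
  then have "d + (\<Sum>C\<in>F. card C) = R"
    using card_Union_cycles_Un_arc[OF a _ F, of d] d(2) D(2) by simp
  with a d F have "(a, d, F) \<in> arc_data R"
    unfolding arc_data_def fillings_def by auto
  then show thesis
    using D_eq by (rule that)
qed

lemma card_admissible: "card (admissible R) = card (arc_data R)"
proof -
  let ?f = "\<lambda>(a, d, F). \<Union> F \<union> arc a d"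
  have "inj_on ?f (arc_data R)"
  proof (rule inj_onI)
    fix x y assume xy: "x \<in> arc_data R" "y \<in> arc_data R" "?f x = ?f y"
    obtain a d F a' d' F' where x: "x = (a, d, F)" and y: "y = (a', d', F')"
      using prod_cases3 by metis
    show "x = y"
      using xy unfolding x y prod.case by (rule Union_Un_arc_inj)
  qed
  moreover have "?f ` arc_data R \<subseteq> admissible R"
    using arc_union_admissible unfolding arc_data_def fillings_def by auto
  moreover have "admissible R \<subseteq> ?f ` arc_data R"
  proof
    fix D assume "D \<in> admissible R"
    then obtain a d F where "(a, d, F) \<in> arc_data R" and "D = \<Union> F \<union> arc a d"
      by (rule admissible_eq_Union_Un_arc)
    then show "D \<in> ?f ` arc_data R"
      by force
  qed
  ultimately have "bij_betw ?f (arc_data R) (admissible R)"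
    unfolding bij_betw_def by blast
  then show ?thesis
    by (simp add: bij_betw_same_card)
qed

lemma card_arc_data:
  "card (arc_data R) =
     (\<Sum>C\<in>cycles. card C * (\<Sum>d = 1..card C - 2. card (fillings (cycles - {C}) d R)))"
proof -
  define g where "g C = (\<Sum>d = 1..card C - 2. card (fillings (cycles - {C}) d R))" for C
  have "card (arc_data R) = (\<Sum>a\<in>moved. g (orbit p a))"
    unfolding arc_data_def g_def using finite_moved finite_cycles
    by (simp add: card_SigmaI finite_fillings)
  also have "\<dots> = (\<Sum>C\<in>cycles. \<Sum>a\<in>C. g (orbit p a))"
    unfolding moved_eq_Union_cycles
    by (subst sum.Union_disjoint) (use finite_cycle cycles_disjoint in auto)
  also have "\<dots> = (\<Sum>C\<in>cycles. card C * g C)"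
    using cycle_eq_orbit by (intro sum.cong) auto
  finally show ?thesis
    unfolding g_def .
qed

lemma card_N3_sum_cycles:
  assumes "wH n p = 2 * r - 1" and "r \<ge> 1"
  shows "card (N3 n p) =
     (\<Sum>C\<in>cycles. card C * (\<Sum>d = 1..card C - 2. card (fillings (cycles - {C}) d (r - 1))))"
  using card_N3_eq_card_admissible[OF assms] card_admissible card_arc_data by simp

definition two_cycles :: "nat set set" where
  "two_cycles = {C \<in> cycles. card C = 2}"

lemma finite_two_cycles: "finite two_cycles"
  unfolding two_cycles_def using finite_cycles by simp

lemma card_two_cycles: "card two_cycles = ncyc n p 2"
  unfolding two_cycles_def ncyc_def nontriv_cycles_eq ..

lemma card_fillings_two_cycles:
  "int (card (fillings two_cycles e R)) = pair_count (ncyc n p 2) R e"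
  using card_fillings_pairs[OF finite_two_cycles] card_two_cycles
  unfolding two_cycles_def by simp

lemma wH_eq_sum_long_cycles: "wH n p = (\<Sum>C\<in>cycles - two_cycles. card C) + 2 * ncyc n p 2"
proof -
  have "(\<Sum>C\<in>two_cycles. card C) = 2 * ncyc n p 2"
    using card_two_cycles unfolding two_cycles_def by simp
  moreover have "two_cycles \<subseteq> cycles"
    unfolding two_cycles_def by blast
  ultimately show ?thesis
    unfolding wH_eq_sum_cycles using finite_cycles by (simp add: sum.subset_diff)
qed

lemma card_N3_sum_long_cycles:
  assumes "wH n p = 2 * r - 1" and "r \<ge> 1"
  shows "card (N3 n p) = (\<Sum>C\<in>cycles - two_cycles.
           card C * (\<Sum>d = 1..card C - 2. card (fillings (cycles - {C}) d (r - 1))))"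
  unfolding card_N3_sum_cycles[OF assms]
  by (rule sum.mono_neutral_right) (auto simp: finite_cycles two_cycles_def)

lemma cycles_of_length:
  assumes "ncyc n p k = 1"
  obtains L where "{C \<in> cycles. card C = k} = {L}"
  using assms unfolding ncyc_def nontriv_cycles_eq by (rule card_1_singletonE)

lemma card_N3_odd_cycle_type:
  assumes s: "2 \<le> s" and long: "ncyc n p (2 * s - 1) = 1"
    and types: "\<forall>C\<in>cycles. card C = 2 * s - 1 \<or> card C = 2"
  defines "R \<equiv> s + ncyc n p 2 - 1"
  shows "int (card (N3 n p)) = int (2 * s - 1) * (\<Sum>d = 1..2 * s - 3. pair_count (ncyc n p 2) R d)"
proof -
  obtain L where L: "{C \<in> cycles. card C = 2 * s - 1} = {L}"
    using long by (rule cycles_of_length)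
  have "cycles - two_cycles = {C \<in> cycles. card C = 2 * s - 1}"
    using types s unfolding two_cycles_def by auto
  with L have long_cycles: "cycles - two_cycles = {L}" and L_card: "card L = 2 * s - 1"
    by auto
  then have "cycles - {L} = two_cycles"
    by (auto simp: two_cycles_def)
  moreover have "wH n p = 2 * (s + ncyc n p 2) - 1"
    unfolding wH_eq_sum_long_cycles long_cycles using L_card s by simp
  ultimately have "card (N3 n p) = card L * (\<Sum>d = 1..card L - 2. card (fillings two_cycles d R))"
    using card_N3_sum_long_cycles[of "s + ncyc n p 2"] s unfolding long_cycles R_def by simp
  also have "card L - 2 = 2 * s - 3"
    using L_card by simp
  finally have "int (card (N3 n p)) =
      int (card L) * (\<Sum>d = 1..2 * s - 3. int (card (fillings two_cycles d R)))"
    unfolding of_nat_mult[symmetric] of_nat_sum[symmetric] of_nat_eq_iff .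
  then show ?thesis
    unfolding L_card card_fillings_two_cycles .
qed

lemma card_N3_even_cycle_type:
  assumes s: "2 \<le> s" and long: "ncyc n p (2 * s) = 1" and three: "ncyc n p 3 = 1"
    and types: "\<forall>C\<in>cycles. card C = 2 * s \<or> card C = 3 \<or> card C = 2"
  defines "R \<equiv> s + ncyc n p 2 + 1"
  shows "int (card (N3 n p)) =
    int (2 * s) * (\<Sum>d = 1..2 * s - 2. pair_count (ncyc n p 2) R d + pair_count (ncyc n p 2) R (d + 3))
    + 3 * (pair_count (ncyc n p 2) R 1 + pair_count (ncyc n p 2) R (1 + 2 * s))"
proof -
  obtain L where L: "{C \<in> cycles. card C = 2 * s} = {L}"
    using long by (rule cycles_of_length)
  obtain T where T: "{C \<in> cycles. card C = 3} = {T}"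
    using three by (rule cycles_of_length)
  have "cycles - two_cycles = {C \<in> cycles. card C = 2 * s} \<union> {C \<in> cycles. card C = 3}"
    using types s unfolding two_cycles_def by auto
  with L T have long_cycles: "cycles - two_cycles = {L, T}"
    and L_card: "card L = 2 * s" and T_card: "card T = 3"
    by auto
  then have "L \<noteq> T" and L: "L \<notin> two_cycles" and T: "T \<notin> two_cycles"
    using s by (auto simp: two_cycles_def)
  then have "cycles - {L} = insert T two_cycles" and "cycles - {T} = insert L two_cycles"
    using long_cycles by (auto simp: two_cycles_def)
  moreover have "wH n p = 2 * (s + 2 + ncyc n p 2) - 1"
    unfolding wH_eq_sum_long_cycles long_cycles using \<open>L \<noteq> T\<close> L_card T_card by simp
  ultimately have "card (N3 n p) =
      card L * (\<Sum>d = 1..card L - 2. card (fillings (insert T two_cycles) d R))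
      + card T * (\<Sum>d = 1..card T - 2. card (fillings (insert L two_cycles) d R))"
    using card_N3_sum_long_cycles[of "s + 2 + ncyc n p 2"] \<open>L \<noteq> T\<close>
    unfolding long_cycles R_def by simp
  also have "card L - 2 = 2 * s - 2"
    using L_card by simp
  also have "card T - 2 = 1"
    using T_card by simp
  finally have "int (card (N3 n p)) =
      int (card L) * (\<Sum>d = 1..2 * s - 2. int (card (fillings (insert T two_cycles) d R)))
      + int (card T) * (\<Sum>d = 1..1. int (card (fillings (insert L two_cycles) d R)))"
    unfolding of_nat_add[symmetric] of_nat_mult[symmetric] of_nat_sum[symmetric] of_nat_eq_iff .
  then show ?thesis
    using finite_two_cycles L T L_card T_card
    by (simp add: card_fillings_insert card_fillings_two_cycles ac_simps)
qed

end

section \<open>Binomial sums\<close>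

lemma binomz_nat: "0 \<le> q \<Longrightarrow> 0 \<le> k \<Longrightarrow> binomz q k = int (nat q choose nat k)"
  unfolding binomz_def by (auto simp: binomial_eq_0)

lemma binomz_neg: "k < 0 \<Longrightarrow> binomz q k = 0"
  unfolding binomz_def by simp

lemma binomz_Pascal:
  assumes "0 \<le> q"
  shows "binomz (q + 1) k = binomz q k + binomz q (k - 1)"
proof (cases "k \<le> 0")
  case True
  then show ?thesis
    using assms by (cases "k = 0") (simp_all add: binomz_nat binomz_neg)
next
  case False
  then have "nat k = Suc (nat (k - 1))" and "nat (q + 1) = Suc (nat q)"
    using assms by simp_all
  then show ?thesis
    using assms False by (simp add: binomz_nat del: of_nat_Suc)
qed

lemma binomz_symmetric:
  assumes "0 \<le> q"
  shows "binomz q k = binomz q (q - k)"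
proof (cases "k < 0 \<or> q < k")
  case True
  then show ?thesis
    unfolding binomz_def by auto
next
  case False
  then have "nat (q - k) = nat q - nat k" and "nat k \<le> nat q"
    by auto
  then show ?thesis
    using False assms unfolding binomz_def by (simp add: binomial_symmetric[symmetric])
qed

lemma pair_count_same_parity:
  assumes "int R = int e + 2 * k"
  shows "pair_count q R e = binomz (int q) k"
proof -
  have "even (int R + int e)"
    using assms by (simp add: ac_simps)
  then have "even (R + e)"
    using even_of_nat_iff[of "R + e"] by simp
  then show ?thesis
    using assms unfolding pair_count_def by simp
qed

lemma pair_count_opposite_parity:
  assumes "int R = int e + 2 * k + 1"
  shows "pair_count q R e = 0"
proof -
  have "odd (int R + int e)"
    using assms by (simp add: ac_simps)
  then have "odd (R + e)"
    using even_of_nat_iff[of "R + e"] by simp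
  then show ?thesis
    unfolding pair_count_def by simp
qed

lemma sum_split_parity:
  fixes f :: "nat \<Rightarrow> 'a::comm_monoid_add"
  shows "(\<Sum>d = 1..N. f d) = (\<Sum>i = 1..(N + 1) div 2. f (2 * i - 1)) + (\<Sum>i = 1..N div 2. f (2 * i))"
proof (induction N)
  case 0
  then show ?case
    by simp
next
  case (Suc N)
  show ?case
  proof (cases "even N")
    case True
    then obtain m where "N = 2 * m"
      by blast
    then show ?thesis
      using Suc by (simp add: ac_simps)
  next
    case False
    then obtain m where "N = 2 * m + 1"
      by (blast elim: oddE)
    then show ?thesis
      using Suc by (simp add: ac_simps)
  qed
qed

lemma sum_split_parity_cases:
  fixes f :: "nat \<Rightarrow> 'a::comm_monoid_add"
  assumes "\<And>i. 1 \<le> i \<Longrightarrow> f (2 * i - 1) = g i" and "\<And>i. 1 \<le> i \<Longrightarrow> f (2 * i) = h i"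
  shows "(\<Sum>d = 1..N. f d) = (\<Sum>i = 1..(N + 1) div 2. g i) + (\<Sum>i = 1..N div 2. h i)"
  unfolding sum_split_parity[of f N] using assms by (intro arg_cong2[where f = "(+)"] sum.cong) auto

lemma odd_cycle_sum_even_r:
  assumes "1 \<le> t" and "2 \<le> s"
  shows "(\<Sum>d = 1..2 * s - 3. pair_count q (2 * t - 1) d) = (\<Sum>i = 1..s - 1. binomz (int q) (int t - int i))"
proof -
  have "(\<Sum>d = 1..2 * s - 3. pair_count q (2 * t - 1) d)
      = (\<Sum>i = 1..(2 * s - 3 + 1) div 2. binomz (int q) (int t - int i)) + (\<Sum>i = 1..(2 * s - 3) div 2. 0)"
  proof (rule sum_split_parity_cases)
    show "pair_count q (2 * t - 1) (2 * i - 1) = binomz (int q) (int t - int i)" if "1 \<le> i" for i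
      by (rule pair_count_same_parity) (use assms that in simp)
    show "pair_count q (2 * t - 1) (2 * i) = 0" for i
      by (rule pair_count_opposite_parity[where k = "int t - int i - 1"]) (use assms in simp)
  qed
  also have "(2 * s - 3 + 1) div 2 = s - 1"
    using assms by presburger
  finally show ?thesis
    by simp
qed

lemma odd_cycle_sum_odd_r:
  assumes "2 \<le> s"
  shows "(\<Sum>d = 1..2 * s - 3. pair_count q (2 * t) d) = (\<Sum>i = 1..s - 2. binomz (int q) (int t - int i))"
proof -
  have "(\<Sum>d = 1..2 * s - 3. pair_count q (2 * t) d)
      = (\<Sum>i = 1..(2 * s - 3 + 1) div 2. 0) + (\<Sum>i = 1..(2 * s - 3) div 2. binomz (int q) (int t - int i))"
  proof (rule sum_split_parity_cases)
    show "pair_count q (2 * t) (2 * i - 1) = 0" if "1 \<le> i" for i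
      by (rule pair_count_opposite_parity[where k = "int t - int i"]) (use that in simp)
    show "pair_count q (2 * t) (2 * i) = binomz (int q) (int t - int i)" for i
      by (rule pair_count_same_parity) simp
  qed
  also have "(2 * s - 3) div 2 = s - 2"
    using assms by presburger
  finally show ?thesis
    by simp
qed

lemma even_cycle_sum_even_r:
  assumes "1 \<le> t" and "2 \<le> s"
  shows "(\<Sum>d = 1..2 * s - 2. pair_count q (2 * t - 1) d + pair_count q (2 * t - 1) (d + 3))
       = (\<Sum>i = 1..s - 1. binomz (int q) (int t - int i)) + (\<Sum>i = 1..s - 1. binomz (int q) (int t - int i - 2))"
proof -
  have "(\<Sum>d = 1..2 * s - 2. pair_count q (2 * t - 1) d + pair_count q (2 * t - 1) (d + 3))
      = (\<Sum>i = 1..(2 * s - 2 + 1) div 2. binomz (int q) (int t - int i))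
        + (\<Sum>i = 1..(2 * s - 2) div 2. binomz (int q) (int t - int i - 2))"
  proof (rule sum_split_parity_cases)
    fix i :: nat assume "1 \<le> i"
    have "pair_count q (2 * t - 1) (2 * i - 1) = binomz (int q) (int t - int i)"
      by (rule pair_count_same_parity) (use assms \<open>1 \<le> i\<close> in simp)
    moreover have "pair_count q (2 * t - 1) (2 * i - 1 + 3) = 0"
      by (rule pair_count_opposite_parity[where k = "int t - int i - 2"]) (use assms \<open>1 \<le> i\<close> in simp)
    ultimately show "pair_count q (2 * t - 1) (2 * i - 1) + pair_count q (2 * t - 1) (2 * i - 1 + 3)
        = binomz (int q) (int t - int i)"
      by simp
    have "pair_count q (2 * t - 1) (2 * i) = 0"
      by (rule pair_count_opposite_parity[where k = "int t - int i - 1"]) (use assms in simp)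
    moreover have "pair_count q (2 * t - 1) (2 * i + 3) = binomz (int q) (int t - int i - 2)"
      by (rule pair_count_same_parity) (use assms in simp)
    ultimately show "pair_count q (2 * t - 1) (2 * i) + pair_count q (2 * t - 1) (2 * i + 3)
        = binomz (int q) (int t - int i - 2)"
      by simp
  qed
  also have "(2 * s - 2 + 1) div 2 = s - 1"
    using assms by presburger
  also have "(2 * s - 2) div 2 = s - 1"
    using assms by presburger
  finally show ?thesis
    by simp
qed

lemma even_cycle_sum_odd_r:
  assumes "2 \<le> s"
  shows "(\<Sum>d = 1..2 * s - 2. pair_count q (2 * t) d + pair_count q (2 * t) (d + 3))
       = (\<Sum>i = 1..s - 1. binomz (int q + 1) (int t - int i))"
proof -
  have "(\<Sum>d = 1..2 * s - 2. pair_count q (2 * t) d + pair_count q (2 * t) (d + 3))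
      = (\<Sum>i = 1..(2 * s - 2 + 1) div 2. binomz (int q) (int t - int i - 1))
        + (\<Sum>i = 1..(2 * s - 2) div 2. binomz (int q) (int t - int i))"
  proof (rule sum_split_parity_cases)
    fix i :: nat assume "1 \<le> i"
    have "pair_count q (2 * t) (2 * i - 1) = 0"
      by (rule pair_count_opposite_parity[where k = "int t - int i"]) (use \<open>1 \<le> i\<close> in simp)
    moreover have "pair_count q (2 * t) (2 * i - 1 + 3) = binomz (int q) (int t - int i - 1)"
      by (rule pair_count_same_parity) (use \<open>1 \<le> i\<close> in simp)
    ultimately show "pair_count q (2 * t) (2 * i - 1) + pair_count q (2 * t) (2 * i - 1 + 3)
        = binomz (int q) (int t - int i - 1)"
      by simp
    have "pair_count q (2 * t) (2 * i) = binomz (int q) (int t - int i)"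
      by (rule pair_count_same_parity) simp
    moreover have "pair_count q (2 * t) (2 * i + 3) = 0"
      by (rule pair_count_opposite_parity[where k = "int t - int i - 2"]) simp
    ultimately show "pair_count q (2 * t) (2 * i) + pair_count q (2 * t) (2 * i + 3)
        = binomz (int q) (int t - int i)"
      by simp
  qed
  also have "(2 * s - 2 + 1) div 2 = s - 1"
    using assms by presburger
  also have "(2 * s - 2) div 2 = s - 1"
    using assms by presburger
  also have "(\<Sum>i = 1..s - 1. binomz (int q) (int t - int i - 1))
      + (\<Sum>i = 1..s - 1. binomz (int q) (int t - int i))
      = (\<Sum>i = 1..s - 1. binomz (int q) (int t - int i) + binomz (int q) (int t - int i - 1))"
    by (simp add: sum.distrib)
  also have "\<dots> = (\<Sum>i = 1..s - 1. binomz (int q + 1) (int t - int i))"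
    by (intro sum.cong refl binomz_Pascal[symmetric]) simp
  finally show ?thesis .
qed

lemma pair_count_ends_even_r:
  assumes "1 \<le> t"
  shows "pair_count q (2 * t - 1) 1 + pair_count q (2 * t - 1) (1 + 2 * s)
       = binomz (int q) (int t - 1) + binomz (int q) (int t - int s - 1)"
proof -
  have "pair_count q (2 * t - 1) 1 = binomz (int q) (int t - 1)"
    by (rule pair_count_same_parity) (use assms in simp)
  moreover have "pair_count q (2 * t - 1) (1 + 2 * s) = binomz (int q) (int t - int s - 1)"
    by (rule pair_count_same_parity) (use assms in simp)
  ultimately show ?thesis
    by simp
qed

lemma pair_count_ends_odd_r: "pair_count q (2 * t) 1 + pair_count q (2 * t) (1 + 2 * s) = 0"
proof -
  have "pair_count q (2 * t) 1 = 0"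
    by (rule pair_count_opposite_parity[where k = "int t - 1"]) simp
  moreover have "pair_count q (2 * t) (1 + 2 * s) = 0"
    by (rule pair_count_opposite_parity[where k = "int t - int s - 1"]) simp
  ultimately show ?thesis
    by simp
qed

text \<open>For \<open>q = r - s - 2\<close> and \<open>r = 2t\<close>, the symmetry \<open>B(t - s - 1) = B(t - 1)\<close> of
  \<open>B = binomz q\<close> and Pascal's rule collapse the sums to the closed form of the paper.\<close>

lemma even_cycle_count_even_r:
  fixes q s t :: nat
  assumes t: "1 \<le> t" and s: "2 \<le> s" and q: "q + s + 2 = 2 * t"
  shows "int (2 * s) * (\<Sum>d = 1..2 * s - 2. pair_count q (2 * t - 1) d + pair_count q (2 * t - 1) (d + 3))
         + 3 * (pair_count q (2 * t - 1) 1 + pair_count q (2 * t - 1) (1 + 2 * s))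
       = 2 * (int (2 * s) + 3) * binomz (int q) (int t - 1)
         + int (2 * s) * (\<Sum>i = 1..s - 2. binomz (int q + 1) (int t - int i - 1))"
proof -
  define B where "B = binomz (int q)"
  define X where "X = (\<Sum>i = 1..s - 2. B (int t - int i - 1))"
  define Y where "Y = (\<Sum>i = 1..s - 2. B (int t - int i - 2))"
  have s_minus: "s - 1 = Suc (s - 2)"
    using s by simp
  have complement: "int t - int s - 1 = int q - (int t - 1)"
    using q by linarith
  have symmetric: "B (int t - int s - 1) = B (int t - 1)"
    unfolding B_def complement by (rule binomz_symmetric[symmetric]) simp
  have "(\<Sum>i = 1..s - 1. B (int t - int i)) = B (int t - 1) + (\<Sum>i = Suc 1..Suc (s - 2). B (int t - int i))"
    unfolding s_minus by (subst sum.atLeast_Suc_atMost) simp_all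
  also have "\<dots> = B (int t - 1) + X"
    unfolding X_def sum.shift_bounds_cl_Suc_ivl by (simp add: algebra_simps)
  moreover have "(\<Sum>i = 1..s - 1. B (int t - int i - 2)) = Y + B (int t - int s - 1)"
    unfolding Y_def s_minus using s by (simp add: algebra_simps)
  moreover have "(\<Sum>i = 1..s - 2. binomz (int q + 1) (int t - int i - 1))
      = (\<Sum>i = 1..s - 2. B (int t - int i - 1) + B (int t - int i - 1 - 1))"
    unfolding B_def by (intro sum.cong refl binomz_Pascal) simp
  then have "(\<Sum>i = 1..s - 2. binomz (int q + 1) (int t - int i - 1)) = X + Y"
    unfolding X_def Y_def sum.distrib by (simp add: algebra_simps)
  ultimately show ?thesis
    unfolding even_cycle_sum_even_r[OF t s] pair_count_ends_even_r[OF t] B_def[symmetric] symmetric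
    by (simp add: algebra_simps)
qed

lemma even_cycle_count_odd_r:
  assumes "2 \<le> s"
  shows "int (2 * s) * (\<Sum>d = 1..2 * s - 2. pair_count q (2 * t) d + pair_count q (2 * t) (d + 3))
         + 3 * (pair_count q (2 * t) 1 + pair_count q (2 * t) (1 + 2 * s))
       = int (2 * s) * (\<Sum>i = 1..s - 1. binomz (int q + 1) (int t - int i))"
  unfolding even_cycle_sum_odd_r[OF assms] pair_count_ends_odd_r by simp

lemma N3_card_odd_cycle_type:
  assumes t: "1 \<le> t" and r: "r = 2 * t \<or> r = 2 * t + 1"
    and hyps: "2 \<le> s \<and> s \<le> r \<and> p \<in> Sym n
        \<and> ncyc n p (2*s-1) = 1 \<and> ncyc n p 2 = r - s
        \<and> (\<forall>c \<in> nontriv_cycles n p. card c = 2*s-1 \<or> card c = 2)"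
  shows "int (card (N3 n p)) =
          (if r = 2*t
           then int (2*s-1) * (\<Sum>i=1..s-1. binomz (int r - int s) (int t - int i))
           else int (2*s-1) * (\<Sum>i=1..s-2. binomz (int r - int s) (int t - int i)))"
proof -
  interpret Sym_member p n
    using hyps by unfold_locales blast
  have s: "2 \<le> s" "s \<le> r"
    using hyps by auto
  have card: "int (card (N3 n p)) = int (2 * s - 1) * (\<Sum>d = 1..2 * s - 3. pair_count (r - s) (r - 1) d)"
    using card_N3_odd_cycle_type[OF s(1)] hyps s unfolding nontriv_cycles_eq by simp
  have q: "int (r - s) = int r - int s"
    using s by simp
  show ?thesis
  proof (cases "r = 2 * t")
    case True
    then show ?thesis
      using card odd_cycle_sum_even_r[OF t s(1), of "r - s"] q by simp
  next
    case False
    with r have "r - 1 = 2 * t"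
      by simp
    with False show ?thesis
      using card odd_cycle_sum_odd_r[OF s(1), of "r - s" t] q by simp
  qed
qed

lemma N3_card_even_cycle_type:
  assumes t: "1 \<le> t" and r: "r = 2 * t \<or> r = 2 * t + 1"
    and hyps: "2 \<le> s \<and> s \<le> r - 2 \<and> p \<in> Sym n
        \<and> ncyc n p (2*s) = 1 \<and> ncyc n p 3 = 1 \<and> ncyc n p 2 = r - s - 2
        \<and> (\<forall>c \<in> nontriv_cycles n p. card c = 2*s \<or> card c = 3 \<or> card c = 2)"
  shows "int (card (N3 n p)) =
          (if r = 2*t
           then 2 * (int (2*s) + 3) * binomz (int r - int s - 2) (int t - 1)
                + int (2*s) * (\<Sum>i=1..s-2. binomz (int r - int s - 1) (int t - int i - 1))
           else int (2*s) * (\<Sum>i=1..s-1. binomz (int r - int s - 1) (int t - int i)))"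
proof -
  interpret Sym_member p n
    using hyps by unfold_locales blast
  define q where "q = r - s - 2"
  have s: "2 \<le> s" "s + 2 \<le> r"
    using hyps by auto
  have long: "ncyc n p (2 * s) = 1" and three: "ncyc n p 3 = 1" and two: "ncyc n p 2 = q"
    and types: "\<forall>C\<in>cycles. card C = 2 * s \<or> card C = 3 \<or> card C = 2"
    using hyps unfolding nontriv_cycles_eq q_def by auto
  have R: "s + q + 1 = r - 1"
    using s unfolding q_def by simp
  have card: "int (card (N3 n p)) =
      int (2 * s) * (\<Sum>d = 1..2 * s - 2. pair_count q (r - 1) d + pair_count q (r - 1) (d + 3))
      + 3 * (pair_count q (r - 1) 1 + pair_count q (r - 1) (1 + 2 * s))"
    using card_N3_even_cycle_type[OF s(1) long three types] unfolding two R .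
  have q_int: "int q = int r - int s - 2" and Suc_q_int: "int q + 1 = int r - int s - 1"
    using s unfolding q_def by simp_all
  have binomz_q: "binomz (int r - int s - 2) = binomz (int q)"
    unfolding q_int ..
  have binomz_Suc_q: "binomz (int r - int s - 1) = binomz (int q + 1)"
    unfolding Suc_q_int ..
  show ?thesis
  proof (cases "r = 2 * t")
    case True
    then have R: "r - 1 = 2 * t - 1" and q_t: "q + s + 2 = 2 * t"
      using s unfolding q_def by simp_all
    show ?thesis
      unfolding if_P[OF True] binomz_q binomz_Suc_q card R
      by (rule even_cycle_count_even_r[OF t s(1) q_t])
  next
    case False
    with r have R: "r - 1 = 2 * t"
      by simp
    show ?thesis
      unfolding if_not_P[OF False] binomz_Suc_q card R
      by (rule even_cycle_count_odd_r[OF s(1)])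
  qed
qed

theorem lemma13:
  fixes t r n :: nat
  assumes "t \<ge> 2" and "r = 2*t \<or> r = 2*t+1" and "n \<ge> 2*r - 1"
  shows
   "(\<forall>s p. 2 \<le> s \<and> s \<le> r \<and> p \<in> Sym n
        \<and> ncyc n p (2*s-1) = 1 \<and> ncyc n p 2 = r - s
        \<and> (\<forall>c \<in> nontriv_cycles n p. card c = 2*s-1 \<or> card c = 2)
      \<longrightarrow> int (card (N3 n p)) =
          (if r = 2*t
           then int (2*s-1) * (\<Sum>i=1..s-1. binomz (int r - int s) (int t - int i))
           else int (2*s-1) * (\<Sum>i=1..s-2. binomz (int r - int s) (int t - int i))))
    \<and>
    (\<forall>s p. 2 \<le> s \<and> s \<le> r - 2 \<and> p \<in> Sym n
        \<and> ncyc n p (2*s) = 1 \<and> ncyc n p 3 = 1 \<and> ncyc n p 2 = r - s - 2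
        \<and> (\<forall>c \<in> nontriv_cycles n p. card c = 2*s \<or> card c = 3 \<or> card c = 2)
      \<longrightarrow> int (card (N3 n p)) =
          (if r = 2*t
           then 2 * (int (2*s) + 3) * binomz (int r - int s - 2) (int t - 1)
                + int (2*s) * (\<Sum>i=1..s-2. binomz (int r - int s - 1) (int t - int i - 1))
           else int (2*s) * (\<Sum>i=1..s-1. binomz (int r - int s - 1) (int t - int i))))"
proof -
  have "1 \<le> t"
    using assms(1) by simp
  then show ?thesis
    using N3_card_odd_cycle_type[OF _ assms(2)] N3_card_even_cycle_type[OF _ assms(2)] by blast
qed

end
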